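(* (1) If $(\alpha^*,u_1^* )$ is an inverse Stackelberg solution, then the pair $(u_0^*,u_1^* )$ with $u_0^*=\alpha^*[u_1^*]$ belongs to $\mathcal{A}$ and $(u_0^*,u_1^* )\in\operatorname{Argmax}\{J_0(u_0,u_1):(u_0,u_1)\in\mathcal{A}\}$. (2) If $(u_0^*,u_1^* )\in\mathcal{A}$ satisfies $(u_0^*,u_1^* )\in\operatorname{Argmax}\{J_0(u_0,u_1):(u_0,u_1)\in\mathcal{A}\}$, then there exists an incentive strategy $\alpha^*$ of the leader such that $\alpha^*[u_1^*]=u_0^*$ and $(\alpha^*,u_1^* )$ is an inverse Stackelberg solution. (3) There exists at least one inverse Stackelberg solution.
   Context: Two-player static game: player $0$ is the leader, player $1$ the follower. $P_0,P_1$ are nonempty compact metric spaces (strategy sets) and $J_0,J_1:P_0\times P_1\to\mathbb{R}$ are continuous payoff functions; each player maximizes his payoff. An incentive strategy of the leader is an arbitrary map $\alpha:P_1\to P_0$, written $u_1\mapsto\alpha[u_1]$. The set of optimal strategies of the follower against $\alpha$ is $\mathcal{F}(\alpha)=\{u_1^*\in P_1: J_1(\alpha[u_1],u_1)\le J_1(\alpha[u_1^*],u_1^* )\ \text{for all } u_1\in P_1\}$. A pair $(\alpha^*,u_1^* )$ (incentive strategy, follower strategy) is an inverse Stackelberg solution if $u_1^*\in\mathcal{F}(\alpha^* )$ and for every incentive strategy $\alpha$, $J_0(\alpha^*[u_1^*],u_1^* )\ge\sup\{J_0(\alpha[u_1],u_1):u_1\in\mathcal{F}(\alpha)\}$ (with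 $\sup\emptyset=-\infty$). Let $V^-=\max_{u_1\in P_1}\min_{u_0\in P_0}J_1(u_0,u_1)$ and $\mathcal{A}=\{(u_0,u_1)\in P_0\times P_1: J_1(u_0,u_1)\ge V^-\}$. *)

theory Defs
  imports "HOL-Analysis.Analysis"
begin

text \<open>Incentive strategies of the leader: arbitrary maps from P1 into P0
  (values outside P1 are irrelevant).\<close>
definition incentive :: "'a set \<Rightarrow> 'b set \<Rightarrow> ('b \<Rightarrow> 'a) \<Rightarrow> bool" where
  "incentive P0 P1 \<alpha> \<longleftrightarrow> (\<forall>u1\<in>P1. \<alpha> u1 \<in> P0)"

definition follower_opt :: "'b set \<Rightarrow> ('a \<times> 'b \<Rightarrow> real) \<Rightarrow> ('b \<Rightarrow> 'a) \<Rightarrow> 'b set" where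
  "follower_opt P1 J1 \<alpha> =
     {u1s \<in> P1. \<forall>u1\<in>P1. J1 (\<alpha> u1, u1) \<le> J1 (\<alpha> u1s, u1s)}"

text \<open>Inverse Stackelberg solution; the supremum is taken in the extended reals,
  so that the supremum of the empty set is minus infinity.\<close>
definition inv_stackelberg ::
  "'a set \<Rightarrow> 'b set \<Rightarrow> ('a \<times> 'b \<Rightarrow> real) \<Rightarrow> ('a \<times> 'b \<Rightarrow> real) \<Rightarrow> ('b \<Rightarrow> 'a) \<Rightarrow> 'b \<Rightarrow> bool" where
  "inv_stackelberg P0 P1 J0 J1 \<alpha>s u1s \<longleftrightarrow>
     incentive P0 P1 \<alpha>s \<and> u1s \<in> follower_opt P1 J1 \<alpha>s \<and>
     (\<forall>\<alpha>. incentive P0 P1 \<alpha> \<longrightarrow>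
        (SUP u1\<in>follower_opt P1 J1 \<alpha>. ereal (J0 (\<alpha> u1, u1))) \<le> ereal (J0 (\<alpha>s u1s, u1s)))"

text \<open>V^- = max over u1 of min over u0 of J1 (the extrema are attained by compactness
  and continuity, so they coincide with SUP/INF).\<close>
definition V_minus :: "'a set \<Rightarrow> 'b set \<Rightarrow> ('a \<times> 'b \<Rightarrow> real) \<Rightarrow> real" where
  "V_minus P0 P1 J1 = (SUP u1\<in>P1. INF u0\<in>P0. J1 (u0, u1))"

definition admissible_set :: "'a set \<Rightarrow> 'b set \<Rightarrow> ('a \<times> 'b \<Rightarrow> real) \<Rightarrow> ('a \<times> 'b) set" where
  "admissible_set P0 P1 J1 = {p \<in> P0 \<times> P1. J1 p \<ge> V_minus P0 P1 J1}"

definition Argmax :: "('c \<Rightarrow> real) \<Rightarrow> 'c set \<Rightarrow> 'c set" where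
  "Argmax f S = {x \<in> S. \<forall>y\<in>S. f y \<le> f x}"

end

theory Submission
  imports Defs
begin

text \<open>The follower can always secure \<open>V\<^sup>-\<close>, so every outcome of an incentive strategy
  met by an optimal follower lies in \<open>\<A>\<close>. Conversely, the leader can enforce any point
  \<open>(u\<^sub>0, u\<^sub>1) \<in> \<A>\<close> by answering \<open>u\<^sub>1\<close> with \<open>u\<^sub>0\<close> and every other \<open>v\<close> with a
  minimiser of \<open>J\<^sub>1(\<cdot>, v)\<close>, which holds the follower down to at most \<open>V\<^sup>-\<close>. Hence the
  inverse Stackelberg solutions are exactly the strategies inducing a maximiser of
  \<open>J\<^sub>0\<close> on \<open>\<A>\<close>; such a maximiser exists because \<open>\<A>\<close> is compact and nonempty
  (it contains \<open>(u\<^sub>0, argmax J\<^sub>1(u\<^sub>0, \<cdot>))\<close> for any \<open>u\<^sub>0\<close>).\<close>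

lemma Argmax_nonempty:
  assumes "compact S" "S \<noteq> {}" "continuous_on S f"
  shows "Argmax f S \<noteq> {}"
  using continuous_attains_sup[OF assms] unfolding Argmax_def by blast

locale compact_game =
  fixes P0 :: "'a::metric_space set" and P1 :: "'b::metric_space set"
    and J1 :: "'a \<times> 'b \<Rightarrow> real"
  assumes compact_P0: "compact P0" and P0_nonempty: "P0 \<noteq> {}"
    and compact_P1: "compact P1" and P1_nonempty: "P1 \<noteq> {}"
    and continuous_J1: "continuous_on (P0 \<times> P1) J1"
begin

abbreviation "V \<equiv> V_minus P0 P1 J1"
abbreviation "A \<equiv> admissible_set P0 P1 J1"

lemma continuous_on_J1_fst: "v \<in> P1 \<Longrightarrow> continuous_on P0 (\<lambda>u. J1 (u, v))"
  by (rule continuous_on_compose2[OF continuous_J1]) (auto intro!: continuous_intros)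

lemma continuous_on_J1_snd: "u \<in> P0 \<Longrightarrow> continuous_on P1 (\<lambda>v. J1 (u, v))"
  by (rule continuous_on_compose2[OF continuous_J1]) (auto intro!: continuous_intros)

lemma bdd_below_J1_fst: "v \<in> P1 \<Longrightarrow> bdd_below ((\<lambda>u. J1 (u, v)) ` P0)"
  by (intro bounded_imp_bdd_below compact_imp_bounded compact_continuous_image
      continuous_on_J1_fst compact_P0)

lemma exists_minimising_response:
  assumes "v \<in> P1"
  obtains u where "u \<in> P0" "(INF w\<in>P0. J1 (w, v)) = J1 (u, v)"
proof -
  obtain u where u: "u \<in> P0" "\<forall>w\<in>P0. J1 (u, v) \<le> J1 (w, v)"
    using continuous_attains_inf[OF compact_P0 P0_nonempty continuous_on_J1_fst[OF assms]]
    by blast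
  have "(INF w\<in>P0. J1 (w, v)) = J1 (u, v)"
    using u P0_nonempty
    by (intro antisym cINF_lower[OF bdd_below_J1_fst[OF assms]] cINF_greatest) auto
  with u show thesis using that by blast
qed

lemma V_minus_le:
  assumes "\<And>v. v \<in> P1 \<Longrightarrow> \<exists>u\<in>P0. J1 (u, v) \<le> c"
  shows "V \<le> c"
  unfolding V_minus_def
proof (rule cSUP_least[OF P1_nonempty])
  fix v assume "v \<in> P1"
  then obtain u where "u \<in> P0" "J1 (u, v) \<le> c" using assms by blast
  then show "(INF w\<in>P0. J1 (w, v)) \<le> c"
    using cINF_lower[OF bdd_below_J1_fst[OF \<open>v \<in> P1\<close>]] order_trans by blast
qed

lemma exists_punishing_response:
  assumes "v \<in> P1"
  shows "\<exists>u\<in>P0. J1 (u, v) \<le> V"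
proof -
  obtain u where u: "u \<in> P0" "(INF w\<in>P0. J1 (w, v)) = J1 (u, v)"
    using exists_minimising_response[OF assms] .
  obtain u' where "u' \<in> P0" using P0_nonempty by blast
  have "bounded ((\<lambda>v. J1 (u', v)) ` P1)"
    by (intro compact_imp_bounded compact_continuous_image continuous_on_J1_snd
        \<open>u' \<in> P0\<close> compact_P1)
  then obtain B where "\<And>w. w \<in> P1 \<Longrightarrow> J1 (u', w) \<le> B"
    by (meson bounded_imp_bdd_above bdd_above.E imageI)
  then have "bdd_above ((\<lambda>w. INF x\<in>P0. J1 (x, w)) ` P1)"
    using cINF_lower[OF bdd_below_J1_fst \<open>u' \<in> P0\<close>]
    by (intro bdd_aboveI[of _ B]) (force intro: order_trans)
  then have "(INF w\<in>P0. J1 (w, v)) \<le> V"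
    unfolding V_minus_def by (rule cSUP_upper[OF assms])
  with u show ?thesis by auto
qed

lemma follower_outcome_admissible:
  assumes "incentive P0 P1 \<alpha>" "u1 \<in> follower_opt P1 J1 \<alpha>"
  shows "(\<alpha> u1, u1) \<in> A"
proof -
  have "V \<le> J1 (\<alpha> u1, u1)"
    using assms by (intro V_minus_le) (auto simp: incentive_def follower_opt_def)
  with assms show ?thesis
    by (simp add: admissible_set_def incentive_def follower_opt_def)
qed

definition punishing_strategy :: "'a \<Rightarrow> 'b \<Rightarrow> 'b \<Rightarrow> 'a" where
  "punishing_strategy u0 u1 v =
     (if v = u1 then u0 else SOME u. u \<in> P0 \<and> J1 (u, v) \<le> V)"

lemma punishing_strategy_induces:
  assumes "(u0, u1) \<in> A"
  shows "incentive P0 P1 (punishing_strategy u0 u1)"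
    and "u1 \<in> follower_opt P1 J1 (punishing_strategy u0 u1)"
    and "punishing_strategy u0 u1 u1 = u0"
proof -
  have punish: "punishing_strategy u0 u1 v \<in> P0 \<and> J1 (punishing_strategy u0 u1 v, v) \<le> V"
    if "v \<in> P1" "v \<noteq> u1" for v
    using someI_ex[OF exists_punishing_response[OF \<open>v \<in> P1\<close>, unfolded Bex_def]] that
    by (simp add: punishing_strategy_def)
  have u: "u0 \<in> P0" "u1 \<in> P1" "V \<le> J1 (u0, u1)"
    using assms by (auto simp: admissible_set_def)
  show "incentive P0 P1 (punishing_strategy u0 u1)"
    using punish u by (auto simp: incentive_def punishing_strategy_def)
  show "u1 \<in> follower_opt P1 J1 (punishing_strategy u0 u1)"
    using punish u by (auto simp: follower_opt_def punishing_strategy_def intro: order_trans)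
  show "punishing_strategy u0 u1 u1 = u0"
    by (simp add: punishing_strategy_def)
qed

lemma inv_stackelberg_iff_Argmax:
  "inv_stackelberg P0 P1 J0 J1 \<alpha> u1 \<longleftrightarrow>
     incentive P0 P1 \<alpha> \<and> u1 \<in> follower_opt P1 J1 \<alpha> \<and> (\<alpha> u1, u1) \<in> Argmax J0 A"
proof
  assume sol: "inv_stackelberg P0 P1 J0 J1 \<alpha> u1"
  have "J0 (u0', u1') \<le> J0 (\<alpha> u1, u1)" if "(u0', u1') \<in> A" for u0' u1'
  proof -
    let ?\<beta> = "punishing_strategy u0' u1'"
    have "ereal (J0 (?\<beta> u1', u1')) \<le> (SUP v\<in>follower_opt P1 J1 ?\<beta>. ereal (J0 (?\<beta> v, v)))"
      using punishing_strategy_induces[OF that] by (intro SUP_upper)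
    also have "\<dots> \<le> ereal (J0 (\<alpha> u1, u1))"
      using sol punishing_strategy_induces[OF that] by (simp add: inv_stackelberg_def)
    finally show ?thesis
      using punishing_strategy_induces[OF that] by simp
  qed
  with sol show "incentive P0 P1 \<alpha> \<and> u1 \<in> follower_opt P1 J1 \<alpha> \<and> (\<alpha> u1, u1) \<in> Argmax J0 A"
    by (auto simp: inv_stackelberg_def Argmax_def intro: follower_outcome_admissible)
next
  assume "incentive P0 P1 \<alpha> \<and> u1 \<in> follower_opt P1 J1 \<alpha> \<and> (\<alpha> u1, u1) \<in> Argmax J0 A"
  then show "inv_stackelberg P0 P1 J0 J1 \<alpha> u1"
    by (auto simp: inv_stackelberg_def Argmax_def intro!: SUP_least
        dest!: follower_outcome_admissible)
qed

lemma admissible_set_nonempty: "A \<noteq> {}"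
proof -
  obtain u where u: "u \<in> P0" using P0_nonempty by blast
  obtain v where v: "v \<in> P1" "\<forall>w\<in>P1. J1 (u, w) \<le> J1 (u, v)"
    using continuous_attains_sup[OF compact_P1 P1_nonempty continuous_on_J1_snd[OF u]]
    by blast
  have "V \<le> J1 (u, v)"
    using u v by (intro V_minus_le) blast
  with u v show ?thesis by (auto simp: admissible_set_def)
qed

lemma compact_admissible_set: "compact A"
proof -
  have "closed {p \<in> P0 \<times> P1. V \<le> J1 p}"
    by (intro continuous_on_closed_Collect_le continuous_on_const continuous_J1
        compact_imp_closed compact_Times compact_P0 compact_P1)
  then have "compact ((P0 \<times> P1) \<inter> {p \<in> P0 \<times> P1. V \<le> J1 p})"
    by (rule compact_Int_closed[OF compact_Times[OF compact_P0 compact_P1]])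
  also have "(P0 \<times> P1) \<inter> {p \<in> P0 \<times> P1. V \<le> J1 p} = A"
    by (auto simp: admissible_set_def)
  finally show ?thesis .
qed

end

theorem theorem1:
  fixes P0 :: "'a::metric_space set" and P1 :: "'b::metric_space set"
    and J0 J1 :: "'a \<times> 'b \<Rightarrow> real"
  assumes "compact P0" "P0 \<noteq> {}" "compact P1" "P1 \<noteq> {}"
    and "continuous_on (P0 \<times> P1) J0" "continuous_on (P0 \<times> P1) J1"
  shows "(\<forall>\<alpha>s u1s. inv_stackelberg P0 P1 J0 J1 \<alpha>s u1s \<longrightarrow>
            (\<alpha>s u1s, u1s) \<in> admissible_set P0 P1 J1 \<and>
            (\<alpha>s u1s, u1s) \<in> Argmax J0 (admissible_set P0 P1 J1))
       \<and> (\<forall>u0s u1s. (u0s, u1s) \<in> admissible_set P0 P1 J1 \<and>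
            (u0s, u1s) \<in> Argmax J0 (admissible_set P0 P1 J1) \<longrightarrow>
            (\<exists>\<alpha>s. incentive P0 P1 \<alpha>s \<and> \<alpha>s u1s = u0s \<and> inv_stackelberg P0 P1 J0 J1 \<alpha>s u1s))
       \<and> (\<exists>\<alpha>s u1s. inv_stackelberg P0 P1 J0 J1 \<alpha>s u1s)"
proof -
  interpret compact_game P0 P1 J1
    using assms by unfold_locales
  have induced: "\<exists>\<alpha>. incentive P0 P1 \<alpha> \<and> \<alpha> u1 = u0 \<and> inv_stackelberg P0 P1 J0 J1 \<alpha> u1"
    if "(u0, u1) \<in> Argmax J0 A" for u0 u1
    using that punishing_strategy_induces[of u0 u1]
    by (intro exI[of _ "punishing_strategy u0 u1"])
       (auto simp: inv_stackelberg_iff_Argmax Argmax_def)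
  have "Argmax J0 A \<noteq> {}"
    using compact_admissible_set admissible_set_nonempty
    by (rule Argmax_nonempty) (auto intro: continuous_on_subset[OF assms(5)]
        simp: admissible_set_def)
  then have "\<exists>\<alpha> u1. inv_stackelberg P0 P1 J0 J1 \<alpha> u1"
    using induced by fast
  with induced show ?thesis
    by (auto simp: inv_stackelberg_iff_Argmax Argmax_def)
qed

end
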